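(* Let $\hat{\mathbf{Z}}\in\mathbb{R}^{d\times d}$ be symmetric with $\hat{\mathbf{Z}}_{J,J}=\hat{\mathbf{z}}\hat{\mathbf{z}}^\top$. Suppose: (1) either $\mathrm{sign}(u_{1,i})=\mathrm{sign}(\hat x_i)$ for all $i\in J$, or $\mathrm{sign}(u_{1,i})=-\mathrm{sign}(\hat x_i)$ for all $i\in J$; (2) $(\mathbf{M}_{J^c,J}-\rho\hat{\mathbf{Z}}_{J^c,J})\hat{\mathbf{x}}=0$ and $\|\hat{\mathbf{Z}}_{J^c,J}\|_{\max}<1$; (3) $\lambda_1(\mathbf{M}_{J,J}-\rho\hat{\mathbf{z}}\hat{\mathbf{z}}^\top)=\lambda_1(\mathbf{M}-\rho\hat{\mathbf{Z}})$ and $\|\hat{\mathbf{Z}}_{J^c,J^c}\|_{\max}<1$; (4) $\lambda_1(\mathbf{M}_{J,J}-\rho\hat{\mathbf{z}}\hat{\mathbf{z}}^\top)>\lambda_2(\mathbf{M}_{J,J}-\rho\hat{\mathbf{z}}\hat{\mathbf{z}}^\top)$. Then the matrix $\hat{\mathbf{X}}$ with $\hat{\mathbf{X}}_{J,J}=\hat{\mathbf{x}}\hat{\mathbf{x}}^\top$ and zeros elsewhere is the unique optimal solution of the SDP problem, and $\mathrm{supp}(\mathrm{diag}(\hat{\mathbf{X}}))=J$.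
   Context: Setup. Let $d\ge2$. $\mathbf{M}^*\in\mathbb{R}^{d\times d}$ is symmetric with $\lambda_1(\mathbf{M}^* )>\lambda_2(\mathbf{M}^* )$; $\mathbf{u}_1$ is a unit eigenvector for $\lambda_1(\mathbf{M}^* )$; $J=\{i:u_{1,i}\ne0\}$, $s=|J|\ge2$, $J^c=[d]\setminus J$. $\mathbf{M}\in\mathbb{R}^{d\times d}$ is any symmetric matrix (the observed matrix), and $\rho>0$. For a symmetric matrix, $\lambda_k$ is its $k$-th largest eigenvalue. Sub-matrices $\mathbf{B}_{I,K}$ are rows in $I$, columns in $K$; $\|\mathbf{B}\|_{\max}=\max_{i,j}|B_{i,j}|$, $\|\mathbf{B}\|_{1,1}=\sum_{i,j}|B_{i,j}|$; $\mathrm{sign}(0)=0$. SDP problem: maximize $\langle\mathbf{M},\mathbf{X}\rangle-\rho\|\mathbf{X}\|_{1,1}$ over symmetric $\mathbf{X}\succeq0$ with $\mathrm{tr}(\mathbf{X})=1$. Witness objects: $\hat{\mathbf{z}}\in\mathbb{R}^J$ with $\hat z_i=\mathrm{sign}(u_{1,i})$; $\hat{\mathbf{x}}\in\mathbb{R}^J$ is a unit leading eigenvector of $\mathbf{M}_{J,J}-\rho\hat{\mathbf{z}}\hat{\mathbf{z}}^\top$. *)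

theory Defs
  imports "Jordan_Normal_Form.DL_Submatrix" "Jordan_Normal_Form.Char_Poly"
begin

(* eigenvalues of a (real, square) matrix with multiplicity, in decreasing order:
   the roots of the characteristic polynomial (all real for symmetric matrices) *)
definition eigs_desc :: "real mat \<Rightarrow> real list" where
  "eigs_desc A = rev (sorted_list_of_multiset (proots (char_poly A)))"

definition lam :: "nat \<Rightarrow> real mat \<Rightarrow> real" where
  "lam k A = eigs_desc A ! (k - 1)"

definition outer :: "real vec \<Rightarrow> real mat" where
  "outer v = mat (dim_vec v) (dim_vec v) (\<lambda>(i,j). v $ i * v $ j)"

definition psd :: "real mat \<Rightarrow> bool" where
  "psd X \<longleftrightarrow> (\<forall>v \<in> carrier_vec (dim_row X). 0 \<le> v \<bullet> (X *\<^sub>v v))"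

definition frob_inner :: "real mat \<Rightarrow> real mat \<Rightarrow> real" where
  "frob_inner A B = (\<Sum>i<dim_row A. \<Sum>j<dim_col A. A $$ (i,j) * B $$ (i,j))"

definition norm11 :: "real mat \<Rightarrow> real" where
  "norm11 A = (\<Sum>i<dim_row A. \<Sum>j<dim_col A. \<bar>A $$ (i,j)\<bar>)"

definition sdp_obj :: "real mat \<Rightarrow> real \<Rightarrow> real mat \<Rightarrow> real" where
  "sdp_obj M \<rho> X = frob_inner M X - \<rho> * norm11 X"

definition mtrace :: "real mat \<Rightarrow> real" where
  "mtrace A = (\<Sum>i<dim_row A. A $$ (i,i))"

definition sdp_feasible :: "nat \<Rightarrow> real mat \<Rightarrow> bool" where
  "sdp_feasible d X \<longleftrightarrow> X \<in> carrier_mat d d \<and> transpose_mat X = X \<and> psd X \<and> mtrace X = 1"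

definition sdp_unique_opt :: "nat \<Rightarrow> real mat \<Rightarrow> real \<Rightarrow> real mat \<Rightarrow> bool" where
  "sdp_unique_opt d M \<rho> X \<longleftrightarrow> sdp_feasible d X \<and>
     (\<forall>Y. sdp_feasible d Y \<and> Y \<noteq> X \<longrightarrow> sdp_obj M \<rho> Y < sdp_obj M \<rho> X)"

end

theory Submission
  imports Defs "HOL-Analysis.Function_Topology"
begin

(* Put B = M - \<rho> Zh. As |Zh_ij| \<le> 1, every feasible Y satisfies
     <M,Y> - \<rho> \<parallel>Y\<parallel>_{1,1} = <B,Y> - \<rho> \<Sum>ij (|Y_ij| - Zh_ij Y_ij) \<le> <B,Y> \<le> \<lambda>\<^sub>1(B) tr Y = \<lambda>\<^sub>1(B),
   and the sign condition (1) makes Xh attain \<lambda>\<^sub>1(M_JJ - \<rho> zh zh\<^sup>T), which equals \<lambda>\<^sub>1(B) by (3).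
   If Y is optimal too, the penalty vanishes, so Y is zero wherever |Zh_ij| < 1, i.e. outside J \<times> J;
   then Y_JJ is a trace-one psd matrix with <B_JJ, Y_JJ> = \<lambda>\<^sub>1(B_JJ), and writing Y_JJ as a sum of
   rank-one terms v v\<^sup>T shows that every v is a top eigenvector of B_JJ, hence a multiple of xh by the
   eigengap (4), so Y = Xh. The eigengap enters through the characteristic polynomial: two orthogonal
   eigenvectors for \<mu> make \<mu> a root of every principal minor, hence of the derivative. *)

section \<open>Quadratic forms\<close>

(* Matrices are also handled as functions on {..<n}\<^sup>2: restricting to and padding from an index
   set is then plain reindexing of sums. *)
definition quad_form :: "nat \<Rightarrow> (nat \<Rightarrow> nat \<Rightarrow> real) \<Rightarrow> (nat \<Rightarrow> real) \<Rightarrow> real" where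
  "quad_form n C v = (\<Sum>i<n. \<Sum>j<n. v i * C i j * v j)"

definition symmetric_fun :: "nat \<Rightarrow> (nat \<Rightarrow> nat \<Rightarrow> real) \<Rightarrow> bool" where
  "symmetric_fun n C \<longleftrightarrow> (\<forall>i<n. \<forall>j<n. C i j = C j i)"

definition psd_fun :: "nat \<Rightarrow> (nat \<Rightarrow> nat \<Rightarrow> real) \<Rightarrow> bool" where
  "psd_fun n C \<longleftrightarrow> (\<forall>v. 0 \<le> quad_form n C v)"

lemma quad_form_cong: "(\<And>i. i < n \<Longrightarrow> v i = w i) \<Longrightarrow> quad_form n C v = quad_form n C w"
  unfolding quad_form_def by (intro sum.cong refl) auto

lemma quad_form_scale: "quad_form n C (\<lambda>i. c * v i) = c^2 * quad_form n C v"
  unfolding quad_form_def by (simp add: sum_distrib_left algebra_simps power2_eq_square)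

lemma quad_form_add:
  assumes "symmetric_fun n C"
  shows "quad_form n C (\<lambda>i. u i + t * w i)
           = quad_form n C u + 2 * t * (\<Sum>i<n. w i * (\<Sum>j<n. C i j * u j)) + t^2 * quad_form n C w"
proof -
  have swap: "(\<Sum>i<n. \<Sum>j<n. u i * C i j * w j) = (\<Sum>i<n. \<Sum>j<n. w i * C i j * u j)"
    by (subst sum.swap) (auto intro!: sum.cong simp: assms[unfolded symmetric_fun_def])
  have "quad_form n C (\<lambda>i. u i + t * w i) = (\<Sum>i<n. \<Sum>j<n. u i * C i j * u j
          + t * (w i * C i j * u j) + t * (u i * C i j * w j) + t^2 * (w i * C i j * w j))"
    unfolding quad_form_def by (intro sum.cong refl) (simp add: algebra_simps power2_eq_square)
  also have "\<dots> = quad_form n C u + t * (\<Sum>i<n. \<Sum>j<n. w i * C i j * u j)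
                  + t * (\<Sum>i<n. \<Sum>j<n. u i * C i j * w j) + t^2 * quad_form n C w"
    unfolding quad_form_def by (simp add: sum.distrib sum_distrib_left)
  also have "(\<Sum>i<n. \<Sum>j<n. w i * C i j * u j) = (\<Sum>i<n. w i * (\<Sum>j<n. C i j * u j))"
    by (simp add: sum_distrib_left mult.assoc)
  finally show ?thesis unfolding swap by (simp add: sum_distrib_left mult.assoc)
qed

lemma quad_form_shift_diag:
  "quad_form n (\<lambda>i j. \<mu> * (if i = j then 1 else 0) - C i j) v
     = \<mu> * (\<Sum>i<n. (v i)^2) - quad_form n C v"
proof -
  have "(\<Sum>j<n. v i * (\<mu> * (if i = j then 1 else 0)) * v j) = \<mu> * (v i)^2" if "i < n" for i
  proof -
    have "(\<Sum>j<n. v i * (\<mu> * (if i = j then 1 else 0)) * v j)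
            = (\<Sum>j<n. if j = i then \<mu> * (v i)^2 else 0)"
      by (rule sum.cong) (auto simp: power2_eq_square)
    with that show ?thesis by simp
  qed
  then have "(\<Sum>i<n. \<Sum>j<n. v i * (\<mu> * (if i = j then 1 else 0)) * v j) = (\<Sum>i<n. \<mu> * (v i)^2)"
    by (intro sum.cong) auto
  moreover have "quad_form n (\<lambda>i j. \<mu> * (if i = j then 1 else 0) - C i j) v
     = (\<Sum>i<n. \<Sum>j<n. v i * (\<mu> * (if i = j then 1 else 0)) * v j) - quad_form n C v"
    unfolding quad_form_def by (simp add: sum_subtractf algebra_simps)
  ultimately show ?thesis by (simp add: sum_distrib_left)
qed

lemma sum_mult_delta:
  assumes "(p::nat) < n"
  shows "(\<Sum>j<n. f j * (if j = p then 1 else 0)) = (f p :: real)"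
proof -
  have "(\<Sum>j<n. f j * (if j = p then 1 else 0)) = (\<Sum>j<n. if j = p then f j else 0)"
    by (rule sum.cong) auto
  with assms show ?thesis by simp
qed

lemma quad_form_unit_vector:
  assumes "p < n"
  shows "quad_form n C (\<lambda>j. if j = p then 1 else 0) = C p p"
proof -
  have "quad_form n C (\<lambda>j. if j = p then 1 else 0) = (\<Sum>i<n. C i p * (if i = p then 1 else 0))"
    unfolding quad_form_def using assms
    by (intro sum.cong refl) (simp add: sum_mult_delta mult.commute)
  also have "\<dots> = C p p" using sum_mult_delta[OF assms] .
  finally show ?thesis .
qed

text \<open>Perturbing \<open>u\<close> along \<open>w = C u\<close>: the form at \<open>u + t w\<close> is \<open>2 t |w|\<^sup>2 + t\<^sup>2 q\<close>, which is
  negative for a suitable \<open>t < 0\<close> unless \<open>w = 0\<close>.\<close>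
lemma psd_fun_kernel:
  assumes sym: "symmetric_fun n C" and psd: "psd_fun n C" and zero: "quad_form n C u = 0"
  shows "\<forall>i<n. (\<Sum>j<n. C i j * u j) = 0"
proof -
  define w where "w i = (\<Sum>j<n. C i j * u j)" for i
  define W where "W = (\<Sum>i<n. w i * w i)"
  define q where "q = quad_form n C w"
  have q0: "q \<ge> 0" using psd unfolding psd_fun_def q_def by auto
  have W0: "W \<ge> 0" unfolding W_def by (auto intro: sum_nonneg)
  define t where "t = - W / (q + 1)"
  have "0 \<le> quad_form n C (\<lambda>i. u i + t * w i)" using psd unfolding psd_fun_def by auto
  also have "\<dots> = 2 * t * W + t^2 * q"
    unfolding quad_form_add[OF sym] zero W_def q_def w_def by simp
  finally have nonneg: "0 \<le> 2 * t * W + t^2 * q" .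
  have "W = 0"
  proof (rule ccontr)
    assume "W \<noteq> 0"
    with W0 have Wpos: "W > 0" by auto
    have "2 * t * W + t^2 * q = W^2 * (- q - 2) / (q + 1)^2"
      unfolding t_def using q0 by (simp add: field_simps power2_eq_square add_nonneg_eq_0_iff)
    also have "\<dots> < 0" using Wpos q0 by (intro divide_neg_pos mult_pos_neg) auto
    finally show False using nonneg by simp
  qed
  then have "\<forall>i\<in>{..<n}. w i * w i = 0"
    unfolding W_def by (subst (asm) sum_nonneg_eq_0_iff) auto
  then show ?thesis unfolding w_def by auto
qed

lemma psd_fun_diag_nonneg: "psd_fun n C \<Longrightarrow> p < n \<Longrightarrow> 0 \<le> C p p"
  using quad_form_unit_vector[of p n C] unfolding psd_fun_def by metis

lemma psd_fun_diag_eq_0: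
  assumes sym: "symmetric_fun n C" and psd: "psd_fun n C" and p: "p < n" "C p p = 0" and j: "j < n"
  shows "C p j = 0" "C j p = 0"
proof -
  have "\<forall>i<n. (\<Sum>j<n. C i j * (if j = p then 1 else 0)) = 0"
    by (rule psd_fun_kernel[OF sym psd]) (simp add: quad_form_unit_vector p)
  then have "C j p = 0" using j sum_mult_delta[OF p(1), of "C j"] by simp
  with sym j p show "C j p = 0" "C p j = 0" unfolding symmetric_fun_def by auto
qed

text \<open>Completing the square in \<open>v p\<close>.\<close>
lemma psd_fun_schur_complement:
  assumes sym: "symmetric_fun n Y" and psd: "psd_fun n Y" and p: "p < n" "Y p p > 0"
  shows "psd_fun n (\<lambda>i j. Y i j - Y i p * Y p j / Y p p)"
  unfolding psd_fun_def
proof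
  fix v
  define a where "a = (\<Sum>j<n. Y p j * v j)"
  define e where "e j = (if j = p then (1::real) else 0)" for j
  have "(\<Sum>i<n. e i * (\<Sum>j<n. Y i j * v j)) = a"
    unfolding a_def e_def using sum_mult_delta[OF p(1), of "\<lambda>i. (\<Sum>j<n. Y i j * v j)"]
    by (simp add: mult.commute)
  moreover have "quad_form n Y e = Y p p" unfolding e_def by (rule quad_form_unit_vector[OF p(1)])
  ultimately have "quad_form n Y (\<lambda>i. v i + (- a / Y p p) * e i)
                     = quad_form n Y v + 2 * (- a / Y p p) * a + (- a / Y p p)^2 * Y p p"
    unfolding quad_form_add[OF sym] by simp
  also have "\<dots> = quad_form n Y v - a^2 / Y p p"
    using p(2) by (simp add: field_simps power2_eq_square)
  also have "\<dots> = quad_form n (\<lambda>i j. Y i j - Y i p * Y p j / Y p p) v"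
  proof -
    have "v i * (Y i j - Y i p * Y p j / Y p p) * v j
            = v i * Y i j * v j - (v i * Y i p) * (Y p j * v j) / Y p p" for i j
      using p(2) by (simp add: field_simps)
    then have "quad_form n (\<lambda>i j. Y i j - Y i p * Y p j / Y p p) v
                 = quad_form n Y v - (\<Sum>i<n. \<Sum>j<n. (v i * Y i p) * (Y p j * v j)) / Y p p"
      unfolding quad_form_def by (simp add: sum_subtractf sum_divide_distrib)
    also have "(\<Sum>i<n. \<Sum>j<n. (v i * Y i p) * (Y p j * v j)) = (\<Sum>i<n. v i * Y i p) * a"
      unfolding a_def by (rule sum_product[symmetric])
    also have "(\<Sum>i<n. v i * Y i p) = a"
      unfolding a_def using sym p(1) unfolding symmetric_fun_def
      by (intro sum.cong refl) (auto simp: mult.commute)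
    finally show ?thesis by (simp add: power2_eq_square)
  qed
  finally show "0 \<le> quad_form n (\<lambda>i j. Y i j - Y i p * Y p j / Y p p) v"
    using psd unfolding psd_fun_def by metis
qed

lemma psd_fun_schur_complement_diag_support:
  assumes sym: "symmetric_fun n Y" and psd: "psd_fun n Y" and p: "p < n" "Y p p > 0"
  shows "{i. i < n \<and> Y i i - Y i p * Y p i / Y p p \<noteq> 0} \<subset> {i. i < n \<and> Y i i \<noteq> 0}"
    (is "?S' \<subset> ?S")
proof (rule psubsetI)
  show "?S' \<subseteq> ?S"
  proof
    fix i assume "i \<in> ?S'"
    then have i: "i < n" "Y i i - Y i p * Y p i / Y p p \<noteq> 0" by auto
    show "i \<in> ?S"
    proof (rule ccontr)
      assume "i \<notin> ?S"
      with i have "Y i i = 0" by simp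
      then have "Y i p = 0" using psd_fun_diag_eq_0(1)[OF sym psd i(1) _ p(1)] by simp
      with i \<open>Y i i = 0\<close> show False by simp
    qed
  qed
  have "p \<notin> ?S'" using p(2) by simp
  moreover have "p \<in> ?S" using p by simp
  ultimately show "?S' \<noteq> ?S" by blast
qed

text \<open>Induction on the number of nonzero diagonal entries, each step splitting off the
  Schur complement term of a positive diagonal entry.\<close>
lemma psd_fun_gram:
  "symmetric_fun n Y \<Longrightarrow> psd_fun n Y \<Longrightarrow> \<exists>(m::nat) V. \<forall>i<n. \<forall>j<n. Y i j = (\<Sum>k<m. V k i * V k j)"
proof (induction "card {i. i < n \<and> Y i i \<noteq> 0}" arbitrary: Y rule: less_induct)
  case less
  note sym = less.prems(1) and psd = less.prems(2)
  show ?case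
  proof (cases "\<exists>p<n. Y p p \<noteq> 0")
    case False
    have "\<forall>i<n. \<forall>j<n. Y i j = 0"
      using False psd_fun_diag_eq_0(1)[OF sym psd] by blast
    then show ?thesis by (intro exI[of _ "0::nat"]) simp
  next
    case True
    then obtain p where p: "p < n" "Y p p \<noteq> 0" by auto
    have Ypp: "Y p p > 0" using psd_fun_diag_nonneg[OF psd p(1)] p(2) by simp
    define Y' where "Y' i j = Y i j - Y i p * Y p j / Y p p" for i j
    have sym': "symmetric_fun n Y'"
      using sym p unfolding symmetric_fun_def Y'_def by (auto simp: mult.commute)
    have psd': "psd_fun n Y'"
      unfolding Y'_def by (rule psd_fun_schur_complement[OF sym psd p(1) Ypp])
    have "{i. i < n \<and> Y' i i \<noteq> 0} \<subset> {i. i < n \<and> Y i i \<noteq> 0}"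
      unfolding Y'_def by (rule psd_fun_schur_complement_diag_support[OF sym psd p(1) Ypp])
    then have "card {i. i < n \<and> Y' i i \<noteq> 0} < card {i. i < n \<and> Y i i \<noteq> 0}"
      by (simp add: psubset_card_mono)
    from less.hyps[OF this sym' psd'] obtain m :: nat and V
      where V: "\<forall>i<n. \<forall>j<n. Y' i j = (\<Sum>k<m. V k i * V k j)" by blast
    define V' where "V' k = (if k < m then V k else (\<lambda>i. Y i p / sqrt (Y p p)))" for k
    have "Y i j = (\<Sum>k<Suc m. V' k i * V' k j)" if ij: "i < n" "j < n" for i j
    proof -
      have "(\<Sum>k<m. V' k i * V' k j) = Y' i j" using V ij unfolding V'_def by simp
      moreover have "V' m i * V' m j = Y i p * Y j p / (sqrt (Y p p) * sqrt (Y p p))"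
        unfolding V'_def by simp
      moreover have "Y j p = Y p j" using sym ij p(1) unfolding symmetric_fun_def by simp
      moreover have "sqrt (Y p p) * sqrt (Y p p) = Y p p" using Ypp by simp
      ultimately show ?thesis unfolding Y'_def by simp
    qed
    then show ?thesis by (intro exI[of _ "Suc m"] exI[of _ V']) blast
  qed
qed

lemma
  assumes "\<forall>i<n. \<forall>j<n. Y i j = (\<Sum>m<K. V m i * V m j)"
  shows gram_frobenius: "(\<Sum>i<n. \<Sum>j<n. C i j * Y i j) = (\<Sum>m<K. quad_form n C (V m))"
    and gram_trace: "(\<Sum>i<n. Y i i) = (\<Sum>m<K. \<Sum>i<n. (V m i)^2)"
proof -
  have "(\<Sum>i<n. \<Sum>j<n. C i j * Y i j) = (\<Sum>i<n. \<Sum>j<n. \<Sum>m<K. V m i * C i j * V m j)"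
    using assms by (intro sum.cong refl) (simp add: sum_distrib_left algebra_simps)
  also have "\<dots> = (\<Sum>m<K. quad_form n C (V m))"
    unfolding quad_form_def by (subst sum.swap, subst (2) sum.swap) (rule refl)
  finally show "(\<Sum>i<n. \<Sum>j<n. C i j * Y i j) = (\<Sum>m<K. quad_form n C (V m))" .
  have "(\<Sum>i<n. Y i i) = (\<Sum>i<n. \<Sum>m<K. (V m i)^2)"
    using assms by (intro sum.cong refl) (simp add: power2_eq_square)
  also have "\<dots> = (\<Sum>m<K. \<Sum>i<n. (V m i)^2)" by (rule sum.swap)
  finally show "(\<Sum>i<n. Y i i) = (\<Sum>m<K. \<Sum>i<n. (V m i)^2)" .
qed

lemma quad_form_le_if_le_on_sphere:
  assumes "\<forall>v. (\<Sum>i<n. (v i)^2) = 1 \<longrightarrow> quad_form n C v \<le> \<mu>"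
  shows "quad_form n C v \<le> \<mu> * (\<Sum>i<n. (v i)^2)"
proof (cases "(\<Sum>i<n. (v i)^2) = 0")
  case True
  then have "\<forall>i\<in>{..<n}. (v i)^2 = 0" by (subst (asm) sum_nonneg_eq_0_iff) auto
  then have "quad_form n C v = 0" unfolding quad_form_def by simp
  with True show ?thesis by simp
next
  case False
  define s where "s = (\<Sum>i<n. (v i)^2)"
  have s: "s > 0" using False unfolding s_def by (metis less_eq_real_def sum_nonneg zero_le_power2)
  have "(\<Sum>i<n. ((1 / sqrt s) * v i)^2) = (\<Sum>i<n. (v i)^2) / s"
    using s by (simp add: power_mult_distrib sum_divide_distrib field_simps)
  then have "(\<Sum>i<n. ((1 / sqrt s) * v i)^2) = 1" using s unfolding s_def by simp
  then have "quad_form n C (\<lambda>i. (1 / sqrt s) * v i) \<le> \<mu>" by (rule assms[rule_format])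
  then have "quad_form n C v / s \<le> \<mu>" unfolding quad_form_scale using s by (simp add: power_divide)
  then show ?thesis using s unfolding s_def by (simp add: divide_le_eq mult.commute)
qed

lemma quad_form_attains_max_on_sphere:
  assumes "n > 0"
  shows "\<exists>u. (\<Sum>i<n. (u i)^2) = 1 \<and> (\<forall>v. (\<Sum>i<n. (v i)^2) = 1 \<longrightarrow> quad_form n C v \<le> quad_form n C u)"
proof -
  define T where "T i = (if i < n then {-1..1} else {0::real})" for i
  define S where "S = Pi UNIV T \<inter> {u. (\<Sum>i<n. (u i)^2) = 1}"
  have "compactin (product_topology (\<lambda>_. euclideanreal) UNIV) (PiE UNIV T)"
    unfolding T_def by (simp add: compactin_PiE compactin_euclidean_iff)
  then have "compact (Pi UNIV T)"
    by (simp add: euclidean_product_topology compactin_euclidean_iff PiE_UNIV_domain)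
  moreover have "closed {u::nat\<Rightarrow>real. (\<Sum>i<n. (u i)^2) = 1}"
    by (intro closed_Collect_eq continuous_intros continuous_on_product_coordinates)
  ultimately have "compact S" unfolding S_def by (rule compact_Int_closed)
  moreover have "S \<noteq> {}"
  proof -
    have "(\<Sum>i<n. (if i = 0 then 1 else 0 :: real)^2) = (\<Sum>i<n. if i = 0 then 1 else 0)"
      by (rule sum.cong) auto
    then have "(\<lambda>i. if i = 0 then 1 else 0 :: real) \<in> S" using assms unfolding S_def T_def by auto
    then show ?thesis by auto
  qed
  moreover have "continuous_on S (quad_form n C)"
    unfolding quad_form_def
    by (intro continuous_intros continuous_on_subset[OF continuous_on_product_coordinates subset_UNIV])
  ultimately obtain u where u: "u \<in> S" "\<forall>y\<in>S. quad_form n C y \<le> quad_form n C u"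
    using continuous_attains_sup by blast
  have "quad_form n C v \<le> quad_form n C u" if v: "(\<Sum>i<n. (v i)^2) = 1" for v
  proof -
    define v' where "v' i = (if i < n then v i else 0)" for i
    have "(v i)^2 \<le> 1" if "i < n" for i
      using member_le_sum[of i "{..<n}" "\<lambda>i. (v i)^2"] that v by simp
    then have "\<bar>v i\<bar> \<le> 1" if "i < n" for i using that abs_square_le_1 by blast
    then have "v' \<in> S" using v unfolding S_def T_def v'_def by (auto simp: abs_le_iff)
    moreover have "quad_form n C v' = quad_form n C v" by (rule quad_form_cong) (simp add: v'_def)
    ultimately show ?thesis using u by auto
  qed
  moreover have "(\<Sum>i<n. (u i)^2) = 1" using u unfolding S_def by auto
  ultimately show ?thesis by blast
qed

text \<open>Attaining the bound puts \<open>u\<close> into the kernel of the positive semidefinite \<open>\<mu> I - C\<close>.\<close>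
lemma eigen_if_attains_quad_form_bound:
  assumes sym: "symmetric_fun n C" and bound: "\<forall>v. quad_form n C v \<le> \<mu> * (\<Sum>i<n. (v i)^2)"
    and attains: "quad_form n C u = \<mu> * (\<Sum>i<n. (u i)^2)" and i: "i < n"
  shows "(\<Sum>j<n. C i j * u j) = \<mu> * u i"
proof -
  define D where "D i j = \<mu> * (if i = j then 1 else 0) - C i j" for i j
  have "symmetric_fun n D" using sym unfolding symmetric_fun_def D_def by auto
  moreover have "psd_fun n D" unfolding psd_fun_def D_def quad_form_shift_diag using bound by simp
  moreover have "quad_form n D u = 0" unfolding D_def quad_form_shift_diag attains by simp
  ultimately have kernel: "\<forall>i<n. (\<Sum>j<n. D i j * u j) = 0" by (rule psd_fun_kernel)
  have "(\<Sum>j<n. D i j * u j) = (\<Sum>j<n. (if j = i then \<mu> * u i else 0)) - (\<Sum>j<n. C i j * u j)"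
    unfolding D_def sum_subtractf[symmetric] by (intro sum.cong) (auto simp: algebra_simps)
  with kernel i show ?thesis by simp
qed

lemma exists_top_eigenvector_fun:
  assumes n: "n > 0" and sym: "symmetric_fun n C"
  shows "\<exists>u \<mu>. (\<Sum>i<n. (u i)^2) = 1 \<and> (\<forall>i<n. (\<Sum>j<n. C i j * u j) = \<mu> * u i)
            \<and> (\<forall>v. quad_form n C v \<le> \<mu> * (\<Sum>i<n. (v i)^2))"
proof -
  obtain u where u1: "(\<Sum>i<n. (u i)^2) = 1"
    and umax: "\<forall>v. (\<Sum>i<n. (v i)^2) = 1 \<longrightarrow> quad_form n C v \<le> quad_form n C u"
    using quad_form_attains_max_on_sphere[OF n] by blast
  have bound: "\<forall>v. quad_form n C v \<le> quad_form n C u * (\<Sum>i<n. (v i)^2)"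
    using quad_form_le_if_le_on_sphere umax by blast
  moreover have "(\<Sum>j<n. C i j * u j) = quad_form n C u * u i" if "i < n" for i
    using eigen_if_attains_quad_form_bound[OF sym bound _ that] u1 by simp
  ultimately show ?thesis using u1 by blast
qed

section \<open>Matrices as functions\<close>

lemma scalar_prod_eq_sum: "w \<in> carrier_vec n \<Longrightarrow> v \<bullet> w = (\<Sum>i<n. v $ i * w $ i)"
  unfolding scalar_prod_def by (simp add: atLeast0LessThan)

lemma mult_mat_vec_eq_sum:
  assumes "A \<in> carrier_mat n m" "v \<in> carrier_vec m" "i < n"
  shows "(A *\<^sub>v v) $ i = (\<Sum>j<m. A $$ (i,j) * v $ j)"
  using assms by (simp add: scalar_prod_eq_sum[of v m])

lemma mult_mat_vec_eq_smult_iff: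
  assumes "A \<in> carrier_mat n n" "v \<in> carrier_vec n"
  shows "A *\<^sub>v v = \<mu> \<cdot>\<^sub>v v \<longleftrightarrow> (\<forall>i<n. (\<Sum>j<n. A $$ (i,j) * v $ j) = \<mu> * v $ i)"
  using assms unfolding vec_eq_iff by (auto simp: mult_mat_vec_eq_sum[symmetric])

lemma quad_form_mat:
  assumes "A \<in> carrier_mat n n" "v \<in> carrier_vec n"
  shows "v \<bullet> (A *\<^sub>v v) = quad_form n (\<lambda>i j. A $$ (i,j)) (\<lambda>i. v $ i)"
  using assms unfolding quad_form_def
  by (simp add: scalar_prod_eq_sum[of _ n] mult_mat_vec_eq_sum sum_distrib_left mult.assoc)

lemma scalar_prod_self_eq_0_iff:
  fixes v :: "real vec"
  assumes "v \<in> carrier_vec n"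
  shows "v \<bullet> v = 0 \<longleftrightarrow> v = 0\<^sub>v n"
  using conjugate_square_eq_0_vec[OF assms] by simp

lemma symmetric_fun_mat:
  assumes "A \<in> carrier_mat n n" "transpose_mat A = A"
  shows "symmetric_fun n (\<lambda>i j. A $$ (i,j))"
  unfolding symmetric_fun_def by (metis assms carrier_matD index_transpose_mat(1))

lemma psd_fun_mat:
  assumes "A \<in> carrier_mat n n" "psd A"
  shows "psd_fun n (\<lambda>i j. A $$ (i,j))"
  unfolding psd_fun_def
proof
  fix v
  have "0 \<le> vec n v \<bullet> (A *\<^sub>v vec n v)" using assms unfolding psd_def by auto
  also have "\<dots> = quad_form n (\<lambda>i j. A $$ (i,j)) v"
    by (simp add: quad_form_mat[OF assms(1)] cong: quad_form_cong)
  finally show "0 \<le> quad_form n (\<lambda>i j. A $$ (i,j)) v" .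
qed

section \<open>Eigenvalues\<close>

lemma char_poly_nonzero: "A \<in> carrier_mat n n \<Longrightarrow> char_poly (A :: real mat) \<noteq> 0"
  using degree_monic_char_poly[of A n] by auto

lemma root_char_poly_le_lam1:
  assumes A: "A \<in> carrier_mat n n" and root: "poly (char_poly A) \<mu> = 0"
  shows "\<mu> \<le> lam 1 A"
proof -
  have "\<mu> \<in> set (eigs_desc A)"
    using root char_poly_nonzero[OF A] unfolding eigs_desc_def by simp
  moreover have "sorted_wrt (\<ge>) (eigs_desc A)" unfolding eigs_desc_def by (simp add: sorted_wrt_rev)
  ultimately show ?thesis unfolding lam_def by (cases "eigs_desc A") auto
qed

lemma lam2_eq_lam1_if_double_root:
  assumes "count (proots (char_poly A)) (lam 1 A) \<ge> 2"
  shows "lam 2 A = lam 1 A"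
proof -
  let ?L = "eigs_desc A"
  have count: "count (mset ?L) (lam 1 A) \<ge> 2" using assms unfolding eigs_desc_def by simp
  then obtain a b rest where L: "?L = a # b # rest"
    by (cases ?L rule: remdups_adj.cases) (auto split: if_splits)
  have sorted: "sorted_wrt (\<ge>) (a # b # rest)"
    unfolding L[symmetric] eigs_desc_def by (simp add: sorted_wrt_rev)
  have lam: "lam 1 A = a" "lam 2 A = b" unfolding lam_def L by simp_all
  show ?thesis
  proof (rule ccontr)
    assume "lam 2 A \<noteq> lam 1 A"
    with sorted lam have "b < a" "\<forall>y\<in>set rest. y \<le> b" by auto
    then have "a \<notin> set (b # rest)" by auto
    then have "count (mset ?L) a = 1" unfolding L by (simp add: count_eq_zero_iff)
    with count lam show False by simp
  qed
qed

lemma quad_form_le_lam1: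
  assumes A: "A \<in> carrier_mat n n" and sym: "transpose_mat A = A" and n: "n > 0"
  shows "quad_form n (\<lambda>i j. A $$ (i,j)) v \<le> lam 1 A * (\<Sum>i<n. (v i)^2)"
proof -
  obtain u \<mu> where u1: "(\<Sum>i<n. (u i)^2) = 1"
    and eigen: "\<forall>i<n. (\<Sum>j<n. A $$ (i,j) * u j) = \<mu> * u i"
    and bound: "\<forall>v. quad_form n (\<lambda>i j. A $$ (i,j)) v \<le> \<mu> * (\<Sum>i<n. (v i)^2)"
    using exists_top_eigenvector_fun[OF n symmetric_fun_mat[OF A sym]] by blast
  have "A *\<^sub>v vec n u = \<mu> \<cdot>\<^sub>v vec n u"
    using eigen by (subst mult_mat_vec_eq_smult_iff[OF A]) auto
  moreover have "vec n u \<noteq> 0\<^sub>v n"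
  proof
    assume "vec n u = 0\<^sub>v n"
    then have "\<forall>i<n. u i = 0" by (metis index_vec index_zero_vec(1))
    with u1 show False by simp
  qed
  ultimately have "eigenvalue A \<mu>" unfolding eigenvalue_def eigenvector_def using A vec_carrier by blast
  then have "\<mu> \<le> lam 1 A" by (intro root_char_poly_le_lam1[OF A]) (simp add: eigenvalue_root_char_poly[OF A])
  then have "\<mu> * (\<Sum>i<n. (v i)^2) \<le> lam 1 A * (\<Sum>i<n. (v i)^2)"
    by (rule mult_right_mono) (auto intro: sum_nonneg)
  with bound show ?thesis by (meson order_trans)
qed

lemma char_poly_mat_delete_root:
  fixes A :: "real mat"
  assumes A: "A \<in> carrier_mat (Suc m) (Suc m)" and i: "i < Suc m"
    and eigen: "\<forall>r<Suc m. (\<Sum>j<Suc m. A $$ (r,j) * y j) = \<mu> * y r"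
    and yi: "y i = 0" and nonzero: "r0 < Suc m" "y r0 \<noteq> 0"
  shows "poly (char_poly (mat_delete A i i)) \<mu> = 0"
proof -
  define D where "D = mat_delete A i i"
  have D: "D \<in> carrier_mat m m" unfolding D_def using mat_delete_carrier[OF A] by simp
  define z where "z = vec m (\<lambda>c. y (insert_index i c))"
  have z: "z \<in> carrier_vec m" unfolding z_def by simp
  have inj: "inj_on (insert_index i) {0..<m}" unfolding insert_index_def inj_on_def by auto
  have "(\<Sum>c'<m. D $$ (c,c') * z $ c') = \<mu> * z $ c" if c: "c < m" for c
  proof -
    have "(\<Sum>c'<m. D $$ (c,c') * z $ c')
            = (\<Sum>c'\<in>{0..<m}. A $$ (insert_index i c, insert_index i c') * y (insert_index i c'))"
      unfolding D_def z_def using c by (intro sum.cong) (auto simp: mat_delete_index[OF A i i])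
    also have "\<dots> = (\<Sum>j\<in>insert_index i ` {0..<m}. A $$ (insert_index i c, j) * y j)"
      by (rule sum.reindex[OF inj, symmetric, unfolded comp_def])
    also have "\<dots> = (\<Sum>j\<in>{0..<Suc m}. A $$ (insert_index i c, j) * y j)"
      unfolding insert_index_image[OF i] using yi i by (intro sum.mono_neutral_left) auto
    also have "\<dots> = \<mu> * z $ c"
      using eigen c unfolding z_def insert_index_def by (simp add: atLeast0LessThan)
    finally show ?thesis .
  qed
  then have "D *\<^sub>v z = \<mu> \<cdot>\<^sub>v z" by (simp add: mult_mat_vec_eq_smult_iff[OF D z])
  moreover have "z \<noteq> 0\<^sub>v m"
  proof
    assume z0: "z = 0\<^sub>v m"
    define c where "c = (if r0 < i then r0 else r0 - 1)"
    have "r0 \<noteq> i" using nonzero yi by auto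
    then have "c < m" "insert_index i c = r0"
      unfolding c_def insert_index_def using nonzero i by auto
    then have "y r0 = 0" using z0 unfolding z_def by (metis index_vec index_zero_vec(1))
    with nonzero show False by simp
  qed
  ultimately have "eigenvalue D \<mu>" unfolding eigenvalue_def eigenvector_def using z D by auto
  then show ?thesis using eigenvalue_root_char_poly[OF D] unfolding D_def by simp
qed

text \<open>The combination \<open>w\<^sub>i x - x\<^sub>i w\<close> (or \<open>x\<close> itself if \<open>x\<^sub>i = 0\<close>) is an eigenvector vanishing at
  \<open>i\<close>; it is nonzero because its inner product with \<open>w\<close> is \<open>-x\<^sub>i |w|\<^sup>2\<close>.\<close>
lemma char_poly_mat_delete_root_if_orthogonal_eigenvectors:
  fixes A :: "real mat"
  assumes A: "A \<in> carrier_mat (Suc m) (Suc m)" and x: "x \<in> carrier_vec (Suc m)"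
    and w: "w \<in> carrier_vec (Suc m)"
    and ex: "A *\<^sub>v x = \<mu> \<cdot>\<^sub>v x" and ew: "A *\<^sub>v w = \<mu> \<cdot>\<^sub>v w"
    and x0: "x \<noteq> 0\<^sub>v (Suc m)" and w0: "w \<noteq> 0\<^sub>v (Suc m)" and xw: "x \<bullet> w = 0" and i: "i < Suc m"
  shows "poly (char_poly (mat_delete A i i)) \<mu> = 0"
proof -
  define y where "y r = (if x $ i = 0 then x $ r else w $ i * x $ r - x $ i * w $ r)" for r
  have ex': "\<forall>r<Suc m. (\<Sum>j<Suc m. A $$ (r,j) * x $ j) = \<mu> * x $ r"
    and ew': "\<forall>r<Suc m. (\<Sum>j<Suc m. A $$ (r,j) * w $ j) = \<mu> * w $ r"
    using ex ew mult_mat_vec_eq_smult_iff[OF A] x w by blast+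
  have "\<forall>r<Suc m. (\<Sum>j<Suc m. A $$ (r,j) * y j) = \<mu> * y r"
  proof (intro allI impI)
    fix r assume r: "r < Suc m"
    show "(\<Sum>j<Suc m. A $$ (r,j) * y j) = \<mu> * y r"
    proof (cases "x $ i = 0")
      case False
      have "(\<Sum>j<Suc m. A $$ (r,j) * y j)
              = w $ i * (\<Sum>j<Suc m. A $$ (r,j) * x $ j) - x $ i * (\<Sum>j<Suc m. A $$ (r,j) * w $ j)"
        unfolding y_def using False by (simp add: sum_distrib_left sum_subtractf algebra_simps)
      with ex' ew' r False show ?thesis unfolding y_def by (simp add: algebra_simps)
    qed (use ex' r y_def in simp)
  qed
  moreover have "y i = 0" unfolding y_def by simp
  moreover have "\<exists>r<Suc m. y r \<noteq> 0"
  proof (cases "x $ i = 0")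
    case True
    with x0 x show ?thesis unfolding y_def by (auto simp: vec_eq_iff)
  next
    case False
    have "(\<Sum>r<Suc m. y r * w $ r) = w $ i * (x \<bullet> w) - x $ i * (w \<bullet> w)"
      unfolding y_def scalar_prod_eq_sum[OF w] using False
      by (simp add: sum_distrib_left sum_subtractf algebra_simps)
    also have "\<dots> \<noteq> 0" using False w0 xw scalar_prod_self_eq_0_iff[OF w] by simp
    finally show ?thesis by (metis (no_types, lifting) lessThan_iff mult_zero_left sum.neutral)
  qed
  ultimately show ?thesis
    using char_poly_mat_delete_root[OF A i] by blast
qed

lemma double_root_if_orthogonal_eigenvectors:
  fixes A :: "real mat"
  assumes A: "A \<in> carrier_mat n n" and x: "x \<in> carrier_vec n" and w: "w \<in> carrier_vec n"
    and ex: "A *\<^sub>v x = \<mu> \<cdot>\<^sub>v x" and ew: "A *\<^sub>v w = \<mu> \<cdot>\<^sub>v w"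
    and x0: "x \<noteq> 0\<^sub>v n" and w0: "w \<noteq> 0\<^sub>v n" and xw: "x \<bullet> w = 0"
  shows "count (proots (char_poly A)) \<mu> \<ge> 2"
proof -
  obtain m where n: "n = Suc m" using x0 x by (cases n) (auto simp: vec_eq_iff)
  let ?p = "char_poly A"
  have p0: "?p \<noteq> 0" by (rule char_poly_nonzero[OF A])
  from x0 have "eigenvalue A \<mu>" unfolding eigenvalue_def eigenvector_def using x A ex by auto
  then have root: "poly ?p \<mu> = 0" using eigenvalue_root_char_poly[OF A] by simp
  have "poly (pderiv ?p) \<mu> = (\<Sum>i<n. poly (char_poly (mat_delete A i i)) \<mu>)"
    unfolding pderiv_char_poly[OF A] poly_sum ..
  also have "\<dots> = 0"
    using char_poly_mat_delete_root_if_orthogonal_eigenvectors assms unfolding n by simp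
  finally have "poly (pderiv ?p) \<mu> = 0" .
  moreover have "pderiv ?p \<noteq> 0"
    using degree_monic_char_poly[OF A] n by (simp add: pderiv_eq_0_iff)
  ultimately have "order \<mu> (pderiv ?p) \<noteq> 0" using order_root by blast
  then have "order \<mu> ?p \<ge> 2" using order_pderiv[OF p0 root] by simp
  then show ?thesis using p0 by simp
qed

lemma top_eigenvector_unique:
  fixes A :: "real mat"
  assumes A: "A \<in> carrier_mat n n" and gap: "lam 1 A > lam 2 A"
    and x: "x \<in> carrier_vec n" "x \<bullet> x = 1" "A *\<^sub>v x = lam 1 A \<cdot>\<^sub>v x"
    and w: "w \<in> carrier_vec n" "A *\<^sub>v w = lam 1 A \<cdot>\<^sub>v w"
  shows "w = (x \<bullet> w) \<cdot>\<^sub>v x"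
proof (rule ccontr)
  define w' where "w' = w - (x \<bullet> w) \<cdot>\<^sub>v x"
  have w': "w' \<in> carrier_vec n" unfolding w'_def using x w by simp
  assume "w \<noteq> (x \<bullet> w) \<cdot>\<^sub>v x"
  then have "w' \<noteq> 0\<^sub>v n" unfolding w'_def using x w by (auto simp: vec_eq_iff)
  moreover have "A *\<^sub>v w' = lam 1 A \<cdot>\<^sub>v w'"
  proof -
    have "A *\<^sub>v w' = A *\<^sub>v w - (x \<bullet> w) \<cdot>\<^sub>v (A *\<^sub>v x)"
      unfolding w'_def using A x w by (simp add: mult_minus_distrib_mat_vec mult_mat_vec)
    then show ?thesis
      unfolding w'_def using A x w by (auto simp: vec_eq_iff algebra_simps)
  qed
  moreover have "x \<bullet> w' = 0"
    unfolding w'_def using x w by (simp add: scalar_prod_minus_distrib)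
  ultimately have "count (proots (char_poly A)) (lam 1 A) \<ge> 2"
    using double_root_if_orthogonal_eigenvectors[OF A x(1) w' x(3)] x(2)
    by (auto simp: scalar_prod_self_eq_0_iff[OF x(1), symmetric])
  with gap show False using lam2_eq_lam1_if_double_root by simp
qed

section \<open>The trace inequality and its equality case\<close>

lemma frobenius_le_lam1_trace:
  assumes A: "A \<in> carrier_mat n n" "transpose_mat A = A" and n: "n > 0"
    and Y: "symmetric_fun n Y" "psd_fun n Y"
  shows "(\<Sum>i<n. \<Sum>j<n. A $$ (i,j) * Y i j) \<le> lam 1 A * (\<Sum>i<n. Y i i)"
proof -
  obtain K :: nat and V where V: "\<forall>i<n. \<forall>j<n. Y i j = (\<Sum>m<K. V m i * V m j)"
    using psd_fun_gram[OF Y] by blast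
  have "(\<Sum>m<K. quad_form n (\<lambda>i j. A $$ (i,j)) (V m)) \<le> (\<Sum>m<K. lam 1 A * (\<Sum>i<n. (V m i)^2))"
    by (intro sum_mono quad_form_le_lam1[OF A n])
  then show ?thesis unfolding gram_frobenius[OF V] gram_trace[OF V] by (simp add: sum_distrib_left)
qed

lemma quad_form_eq_lam1_imp_parallel:
  assumes A: "A \<in> carrier_mat n n" "transpose_mat A = A" and n: "n > 0" and gap: "lam 1 A > lam 2 A"
    and x: "x \<in> carrier_vec n" "x \<bullet> x = 1" "A *\<^sub>v x = lam 1 A \<cdot>\<^sub>v x"
    and attains: "quad_form n (\<lambda>i j. A $$ (i,j)) v = lam 1 A * (\<Sum>i<n. (v i)^2)"
    and i: "i < n"
  shows "v i = (x \<bullet> vec n v) * x $ i"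
proof -
  have "A *\<^sub>v vec n v = lam 1 A \<cdot>\<^sub>v vec n v"
  proof (subst mult_mat_vec_eq_smult_iff[OF A(1)], safe)
    fix r assume r: "r < n"
    have "(\<Sum>j<n. A $$ (r,j) * vec n v $ j) = (\<Sum>j<n. A $$ (r,j) * v j)"
      by (intro sum.cong) auto
    also have "\<dots> = lam 1 A * v r"
      using eigen_if_attains_quad_form_bound[OF symmetric_fun_mat[OF A] _ attains r]
        quad_form_le_lam1[OF A n] by blast
    finally show "(\<Sum>j<n. A $$ (r,j) * vec n v $ j) = lam 1 A * vec n v $ r" using r by simp
  qed simp
  then have "vec n v = (x \<bullet> vec n v) \<cdot>\<^sub>v x" by (rule top_eigenvector_unique[OF A(1) gap x, rotated]) simp
  then show ?thesis using i x by (metis index_smult_vec(1) index_vec carrier_vecD)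
qed

text \<open>Equality forces every Gram vector of \<open>Y\<close> to attain the Rayleigh bound.\<close>
lemma frobenius_eq_lam1_trace_imp_rank_one:
  assumes A: "A \<in> carrier_mat n n" "transpose_mat A = A" and gap: "lam 1 A > lam 2 A"
    and x: "x \<in> carrier_vec n" "x \<bullet> x = 1" "A *\<^sub>v x = lam 1 A \<cdot>\<^sub>v x"
    and Y: "symmetric_fun n Y" "psd_fun n Y"
    and eq: "(\<Sum>i<n. \<Sum>j<n. A $$ (i,j) * Y i j) = lam 1 A * (\<Sum>i<n. Y i i)"
    and kl: "k < n" "l < n"
  shows "Y k l = (\<Sum>i<n. Y i i) * (x $ k * x $ l)"
proof -
  let ?A = "\<lambda>i j. A $$ (i,j)"
  have n: "n > 0" using kl by simp
  obtain K :: nat and V where V: "\<forall>i<n. \<forall>j<n. Y i j = (\<Sum>m<K. V m i * V m j)"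
    using psd_fun_gram[OF Y] by blast
  have slack: "0 \<le> lam 1 A * (\<Sum>i<n. (V m i)^2) - quad_form n ?A (V m)" for m
    using quad_form_le_lam1[OF A n] by simp
  have "(\<Sum>m<K. lam 1 A * (\<Sum>i<n. (V m i)^2) - quad_form n ?A (V m)) = 0"
    using eq unfolding gram_frobenius[OF V] gram_trace[OF V] by (simp add: sum_subtractf sum_distrib_left)
  then have attains: "quad_form n ?A (V m) = lam 1 A * (\<Sum>i<n. (V m i)^2)" if "m < K" for m
    using slack that by (subst (asm) sum_nonneg_eq_0_iff) auto
  define c where "c m = x \<bullet> vec n (V m)" for m
  have parallel: "V m i = c m * x $ i" if "m < K" "i < n" for m i
    unfolding c_def by (rule quad_form_eq_lam1_imp_parallel[OF A n gap x attains[OF that(1)] that(2)])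
  have "(\<Sum>i<n. (V m i)^2) = (c m)^2" if "m < K" for m
  proof -
    have "(\<Sum>i<n. (V m i)^2) = (\<Sum>i<n. (c m)^2 * (x $ i * x $ i))"
      using that by (intro sum.cong) (simp_all add: parallel power2_eq_square)
    with x(2) show ?thesis by (simp add: scalar_prod_eq_sum[OF x(1)] sum_distrib_left[symmetric])
  qed
  then have trace: "(\<Sum>i<n. Y i i) = (\<Sum>m<K. (c m)^2)"
    unfolding gram_trace[OF V] by simp
  have "Y k l = (\<Sum>m<K. (c m)^2 * (x $ k * x $ l))"
    using V kl by (auto intro!: sum.cong simp: parallel power2_eq_square)
  then show ?thesis unfolding trace by (simp add: sum_distrib_right)
qed

section \<open>Index sets and submatrices\<close>

lemma pick_bij:
  assumes "finite J"
  shows "bij_betw (pick J) {..<card J} J"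
proof -
  have inj: "inj_on (pick J) {..<card J}"
    unfolding inj_on_def by (metis lessThan_iff linorder_neqE_nat pick_mono order_less_irrefl)
  moreover have "pick J ` {..<card J} \<subseteq> J" by (auto intro: pick_in_set)
  moreover have "card (pick J ` {..<card J}) = card J" using card_image[OF inj] by simp
  ultimately show ?thesis unfolding bij_betw_def using card_subset_eq[OF assms] by blast
qed

lemma pick_surj:
  assumes "finite J" "i \<in> J"
  obtains k where "k < card J" "i = pick J k"
  using bij_betw_imp_surj_on[OF pick_bij[OF assms(1)]] assms(2) by force

lemma sum_pick: "finite J \<Longrightarrow> (\<Sum>i\<in>J. g i) = (\<Sum>k<card J. g (pick J k))"
  using sum.reindex_bij_betw[OF pick_bij] by metis

lemma pick_lessThan:
  assumes "J \<subseteq> {..<d}" "k < card J"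
  shows "pick J k \<in> J" "pick J k < d"
  using assms pick_in_set by auto

lemma sum_lessThan_pick:
  assumes "J \<subseteq> {..<d}" "\<And>i. i < d \<Longrightarrow> i \<notin> J \<Longrightarrow> g i = 0"
  shows "(\<Sum>i<d. g i) = (\<Sum>k<card J. g (pick J k))"
proof -
  have "(\<Sum>i<d. g i) = (\<Sum>i\<in>J. g i)"
    using assms by (intro sum.mono_neutral_right) auto
  also have "\<dots> = (\<Sum>k<card J. g (pick J k))"
    using assms(1) by (intro sum_pick) (meson finite_lessThan finite_subset)
  finally show ?thesis .
qed

lemma sum2_lessThan_pick:
  assumes "J \<subseteq> {..<d}" "\<And>i j. i < d \<Longrightarrow> j < d \<Longrightarrow> i \<notin> J \<or> j \<notin> J \<Longrightarrow> f i j = 0"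
  shows "(\<Sum>i<d. \<Sum>j<d. f i j) = (\<Sum>k<card J. \<Sum>l<card J. f (pick J k) (pick J l))"
proof -
  have "(\<Sum>i<d. \<Sum>j<d. f i j) = (\<Sum>k<card J. \<Sum>j<d. f (pick J k) j)"
    using assms by (intro sum_lessThan_pick) auto
  also have "\<dots> = (\<Sum>k<card J. \<Sum>l<card J. f (pick J k) (pick J l))"
    using assms pick_lessThan[OF assms(1)] by (intro sum.cong refl sum_lessThan_pick) auto
  finally show ?thesis .
qed

lemma psd_fun_restrict:
  assumes J: "J \<subseteq> {..<d}" and Y: "psd_fun d Y"
  shows "psd_fun (card J) (\<lambda>k l. Y (pick J k) (pick J l))"
  unfolding psd_fun_def
proof
  fix g :: "nat \<Rightarrow> real"
  define v where "v i = (if i \<in> J then g (card {a\<in>J. a < i}) else 0)" for i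
  have "quad_form d Y v = quad_form (card J) (\<lambda>k l. Y (pick J k) (pick J l)) g"
    unfolding quad_form_def
    by (subst sum2_lessThan_pick[OF J]) (auto simp: v_def card_pick pick_lessThan[OF J])
  with Y show "0 \<le> quad_form (card J) (\<lambda>k l. Y (pick J k) (pick J l)) g"
    unfolding psd_fun_def by metis
qed

lemma card_submatrix_index_set:
  assumes "A \<in> carrier_mat d d" "J \<subseteq> {..<d}"
  shows "card {i. i < dim_row A \<and> i \<in> J} = card J" "card {j. j < dim_col A \<and> j \<in> J} = card J"
proof -
  have "{i. i < dim_row A \<and> i \<in> J} = J" "{j. j < dim_col A \<and> j \<in> J} = J" using assms by auto
  then show "card {i. i < dim_row A \<and> i \<in> J} = card J" "card {j. j < dim_col A \<and> j \<in> J} = card J"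
    by simp_all
qed

lemma submatrix_carrier:
  assumes "A \<in> carrier_mat d d" "J \<subseteq> {..<d}"
  shows "submatrix A J J \<in> carrier_mat (card J) (card J)"
  using card_submatrix_index_set[OF assms] unfolding carrier_mat_def by (simp add: dim_submatrix)

lemma submatrix_index_pick:
  assumes "A \<in> carrier_mat d d" "J \<subseteq> {..<d}" "k < card J" "l < card J"
  shows "submatrix A J J $$ (k,l) = A $$ (pick J k, pick J l)"
  using card_submatrix_index_set[OF assms(1,2)] assms(3,4) by (intro submatrix_index) simp_all

lemma transpose_minus_smult_sym:
  assumes "M \<in> carrier_mat d d" "transpose_mat M = M" "Z \<in> carrier_mat d d" "transpose_mat Z = Z"
  shows "transpose_mat (M - c \<cdot>\<^sub>m Z) = M - c \<cdot>\<^sub>m Z"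
proof -
  have "M $$ (j,i) = M $$ (i,j)" "Z $$ (j,i) = Z $$ (i,j)" if "i < d" "j < d" for i j
    using assms that by (metis carrier_matD index_transpose_mat(1))+
  then show ?thesis using assms by (intro eq_matI) auto
qed

lemma submatrix_minus_smult:
  assumes "M \<in> carrier_mat d d" "Z \<in> carrier_mat d d" "J \<subseteq> {..<d}"
  shows "submatrix (M - c \<cdot>\<^sub>m Z) J J = submatrix M J J - c \<cdot>\<^sub>m submatrix Z J J"
proof -
  have MZ: "M - c \<cdot>\<^sub>m Z \<in> carrier_mat d d" using assms by (simp add: minus_carrier_mat)
  note carriers = submatrix_carrier[OF assms(1,3)] submatrix_carrier[OF assms(2,3)]
    submatrix_carrier[OF MZ assms(3)]
  show ?thesis
  proof (rule eq_matI)
    fix k l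
    assume "k < dim_row (submatrix M J J - c \<cdot>\<^sub>m submatrix Z J J)"
      and "l < dim_col (submatrix M J J - c \<cdot>\<^sub>m submatrix Z J J)"
    then have kl: "k < card J" "l < card J" using carriers by auto
    then show "submatrix (M - c \<cdot>\<^sub>m Z) J J $$ (k,l) = (submatrix M J J - c \<cdot>\<^sub>m submatrix Z J J) $$ (k,l)"
      using assms carriers pick_lessThan(2)[OF assms(3)]
      by (simp add: submatrix_index_pick[OF MZ assms(3) kl] submatrix_index_pick[OF assms(1,3) kl]
          submatrix_index_pick[OF assms(2,3) kl])
  qed (use carriers in auto)
qed

lemma transpose_submatrix_sym:
  assumes "B \<in> carrier_mat d d" "transpose_mat B = B" "J \<subseteq> {..<d}"
  shows "transpose_mat (submatrix B J J) = submatrix B J J"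
proof -
  have "B $$ (j,i) = B $$ (i,j)" if "i < d" "j < d" for i j
    using assms that by (metis carrier_matD index_transpose_mat(1))
  then show ?thesis
    using submatrix_carrier[OF assms(1,3)] pick_lessThan(2)[OF assms(3)]
    by (intro eq_matI) (auto simp: submatrix_index_pick[OF assms(1,3)])
qed

lemma outer_index: "k < dim_vec v \<Longrightarrow> l < dim_vec v \<Longrightarrow> outer v $$ (k,l) = v $ k * v $ l"
  unfolding outer_def by simp

lemma padded_outer_index:
  assumes X: "X \<in> carrier_mat d d" "submatrix X J J = outer x" and J: "J \<subseteq> {..<d}"
    and x: "x \<in> carrier_vec (card J)" and kl: "k < card J" "l < card J"
  shows "X $$ (pick J k, pick J l) = x $ k * x $ l"
  using submatrix_index_pick[OF X(1) J kl] X(2) x kl by (simp add: outer_index)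

section \<open>The SDP\<close>

lemma sdp_obj_eq_frobenius_minus_penalty:
  assumes "M \<in> carrier_mat d d" "Z \<in> carrier_mat d d" "Y \<in> carrier_mat d d"
  shows "sdp_obj M \<rho> Y = frob_inner (M - \<rho> \<cdot>\<^sub>m Z) Y
                           - \<rho> * (\<Sum>i<d. \<Sum>j<d. \<bar>Y $$ (i,j)\<bar> - Z $$ (i,j) * Y $$ (i,j))"
  using assms unfolding sdp_obj_def frob_inner_def norm11_def
  by (simp add: sum_subtractf sum_distrib_left algebra_simps)

lemma abs_minus_mult_nonneg:
  assumes "\<bar>z\<bar> \<le> 1"
  shows "0 \<le> \<bar>y\<bar> - z * (y::real)"
proof -
  have "z * y \<le> \<bar>z\<bar> * \<bar>y\<bar>" by (simp add: abs_mult[symmetric])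
  also have "\<dots> \<le> \<bar>y\<bar>" using assms by (simp add: mult_left_le_one_le)
  finally show ?thesis by simp
qed

lemma abs_minus_mult_eq_0:
  assumes "\<bar>z\<bar> < 1" "\<bar>y\<bar> - z * y = 0"
  shows "(y::real) = 0"
proof (rule ccontr)
  assume "y \<noteq> 0"
  have "z * y \<le> \<bar>z\<bar> * \<bar>y\<bar>" by (simp add: abs_mult[symmetric])
  also have "\<dots> < \<bar>y\<bar>" using assms(1) \<open>y \<noteq> 0\<close> by simp
  finally show False using assms(2) by simp
qed

lemma frob_inner_le_lam1:
  assumes B: "B \<in> carrier_mat d d" "transpose_mat B = B" and d: "d > 0" and Y: "sdp_feasible d Y"
  shows "frob_inner B Y \<le> lam 1 B"
proof -
  have Yc: "Y \<in> carrier_mat d d" "transpose_mat Y = Y" "psd Y" "mtrace Y = 1"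
    using Y unfolding sdp_feasible_def by auto
  have "frob_inner B Y \<le> lam 1 B * mtrace Y"
    using frobenius_le_lam1_trace[OF B d symmetric_fun_mat[OF Yc(1,2)] psd_fun_mat[OF Yc(1,3)]] B(1) Yc(1)
    unfolding frob_inner_def mtrace_def by simp
  with Yc(4) show ?thesis by simp
qed

lemma sdp_obj_le_lam1:
  assumes M: "M \<in> carrier_mat d d" "transpose_mat M = M"
    and Z: "Z \<in> carrier_mat d d" "transpose_mat Z = Z" "\<forall>i<d. \<forall>j<d. \<bar>Z $$ (i,j)\<bar> \<le> 1"
    and \<rho>: "\<rho> \<ge> 0" and d: "d > 0" and Y: "sdp_feasible d Y"
  shows "sdp_obj M \<rho> Y \<le> lam 1 (M - \<rho> \<cdot>\<^sub>m Z)"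
    and "\<rho> > 0 \<Longrightarrow> sdp_obj M \<rho> Y = lam 1 (M - \<rho> \<cdot>\<^sub>m Z) \<Longrightarrow>
           frob_inner (M - \<rho> \<cdot>\<^sub>m Z) Y = lam 1 (M - \<rho> \<cdot>\<^sub>m Z)
           \<and> (\<forall>i<d. \<forall>j<d. \<bar>Z $$ (i,j)\<bar> < 1 \<longrightarrow> Y $$ (i,j) = 0)"
proof -
  define P where "P i j = \<bar>Y $$ (i,j)\<bar> - Z $$ (i,j) * Y $$ (i,j)" for i j
  have Yc: "Y \<in> carrier_mat d d" using Y unfolding sdp_feasible_def by auto
  have frob: "frob_inner (M - \<rho> \<cdot>\<^sub>m Z) Y \<le> lam 1 (M - \<rho> \<cdot>\<^sub>m Z)"
    using frob_inner_le_lam1[OF _ transpose_minus_smult_sym[OF M Z(1,2)] d Y] Z(1)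
    by (simp add: minus_carrier_mat)
  have P: "0 \<le> P i j" if "i < d" "j < d" for i j
    unfolding P_def by (rule abs_minus_mult_nonneg) (use Z(3) that in auto)
  then have penalty: "0 \<le> \<rho> * (\<Sum>i<d. \<Sum>j<d. P i j)"
    using \<rho> by (auto intro!: mult_nonneg_nonneg sum_nonneg)
  have obj: "sdp_obj M \<rho> Y = frob_inner (M - \<rho> \<cdot>\<^sub>m Z) Y - \<rho> * (\<Sum>i<d. \<Sum>j<d. P i j)"
    unfolding P_def by (rule sdp_obj_eq_frobenius_minus_penalty[OF M(1) Z(1) Yc])
  with frob penalty show "sdp_obj M \<rho> Y \<le> lam 1 (M - \<rho> \<cdot>\<^sub>m Z)" by linarith
  assume "\<rho> > 0" and eq: "sdp_obj M \<rho> Y = lam 1 (M - \<rho> \<cdot>\<^sub>m Z)"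
  have frob_eq: "frob_inner (M - \<rho> \<cdot>\<^sub>m Z) Y = lam 1 (M - \<rho> \<cdot>\<^sub>m Z)"
    and "\<rho> * (\<Sum>i<d. \<Sum>j<d. P i j) = 0"
    using obj frob penalty eq by linarith+
  with \<open>\<rho> > 0\<close> have "(\<Sum>i<d. \<Sum>j<d. P i j) = 0" by simp
  then have "\<forall>i\<in>{..<d}. (\<Sum>j<d. P i j) = 0"
    using P by (subst (asm) sum_nonneg_eq_0_iff) (auto intro!: sum_nonneg)
  then have "P i j = 0" if "i < d" "j < d" for i j
  proof -
    have "(\<Sum>j<d. P i j) = 0" using \<open>\<forall>i\<in>{..<d}. _\<close> that(1) by simp
    with P that show ?thesis by (subst (asm) sum_nonneg_eq_0_iff) auto
  qed
  then show "frob_inner (M - \<rho> \<cdot>\<^sub>m Z) Y = lam 1 (M - \<rho> \<cdot>\<^sub>m Z)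
           \<and> (\<forall>i<d. \<forall>j<d. \<bar>Z $$ (i,j)\<bar> < 1 \<longrightarrow> Y $$ (i,j) = 0)"
    using frob_eq abs_minus_mult_eq_0 unfolding P_def by blast
qed

lemma padded_outer_feasible:
  assumes J: "J \<subseteq> {..<d}" and x: "x \<in> carrier_vec (card J)" "x \<bullet> x = 1"
    and X: "X \<in> carrier_mat d d" "submatrix X J J = outer x"
      "\<forall>i<d. \<forall>j<d. i \<notin> J \<or> j \<notin> J \<longrightarrow> X $$ (i,j) = 0"
  shows "sdp_feasible d X"
proof -
  note X_J = padded_outer_index[OF X(1,2) J x(1)]
  have "X $$ (j,i) = X $$ (i,j)" if "i < d" "j < d" for i j
  proof (cases "i \<in> J \<and> j \<in> J")
    case True
    with J obtain k l where "k < card J" "l < card J" "i = pick J k" "j = pick J l"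
      by (metis finite_lessThan finite_subset pick_surj)
    then show ?thesis using X_J by simp
  qed (use X(3) that in auto)
  then have "transpose_mat X = X" using X(1) by (intro eq_matI) auto
  moreover have "psd X"
    unfolding psd_def
  proof
    fix v :: "real vec" assume "v \<in> carrier_vec (dim_row X)"
    then have v: "v \<in> carrier_vec d" using X(1) by simp
    have "v \<bullet> (X *\<^sub>v v) = (\<Sum>k<card J. \<Sum>l<card J. (v $ pick J k * x $ k) * (x $ l * v $ pick J l))"
      unfolding quad_form_mat[OF X(1) v] quad_form_def
      by (subst sum2_lessThan_pick[OF J]) (auto simp: X(3) X_J mult_ac)
    also have "\<dots> = (\<Sum>k<card J. v $ pick J k * x $ k)^2"
      by (simp add: sum_product[symmetric] power2_eq_square mult.commute)
    finally show "0 \<le> v \<bullet> (X *\<^sub>v v)" by simp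
  qed
  moreover have "mtrace X = 1"
  proof -
    have "mtrace X = (\<Sum>k<card J. X $$ (pick J k, pick J k))"
      unfolding mtrace_def using X(1) X(3) by (simp add: sum_lessThan_pick[OF J])
    also have "\<dots> = x \<bullet> x" using X_J by (simp add: scalar_prod_eq_sum[OF x(1)])
    finally show ?thesis using x(2) by simp
  qed
  ultimately show ?thesis unfolding sdp_feasible_def using X(1) by simp
qed

lemma padded_outer_sdp_obj:
  assumes J: "J \<subseteq> {..<d}" and x: "x \<in> carrier_vec (card J)"
    and X: "X \<in> carrier_mat d d" "submatrix X J J = outer x"
      "\<forall>i<d. \<forall>j<d. i \<notin> J \<or> j \<notin> J \<longrightarrow> X $$ (i,j) = 0"
    and M: "M \<in> carrier_mat d d" and z: "dim_vec z = card J"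
    and signs: "\<forall>k<card J. \<forall>l<card J. \<bar>x $ k * x $ l\<bar> = z $ k * z $ l * (x $ k * x $ l)"
  shows "sdp_obj M \<rho> X = x \<bullet> ((submatrix M J J - \<rho> \<cdot>\<^sub>m outer z) *\<^sub>v x)"
proof -
  note X_J = padded_outer_index[OF X(1,2) J x]
  have A: "submatrix M J J - \<rho> \<cdot>\<^sub>m outer z \<in> carrier_mat (card J) (card J)"
    using submatrix_carrier[OF M J] z by (simp add: outer_def minus_carrier_mat)
  have "sdp_obj M \<rho> X = (\<Sum>i<d. \<Sum>j<d. M $$ (i,j) * X $$ (i,j) - \<rho> * \<bar>X $$ (i,j)\<bar>)"
    unfolding sdp_obj_def frob_inner_def norm11_def using M X(1)
    by (simp add: sum_subtractf sum_distrib_left)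
  also have "\<dots> = (\<Sum>k<card J. \<Sum>l<card J. M $$ (pick J k, pick J l) * X $$ (pick J k, pick J l)
                           - \<rho> * \<bar>X $$ (pick J k, pick J l)\<bar>)"
    using X(3) by (subst sum2_lessThan_pick[OF J]) auto
  also have "\<dots> = (\<Sum>k<card J. \<Sum>l<card J. x $ k * (submatrix M J J - \<rho> \<cdot>\<^sub>m outer z) $$ (k,l) * x $ l)"
  proof (intro sum.cong refl)
    fix k l assume "k \<in> {..<card J}" "l \<in> {..<card J}"
    then have kl: "k < card J" "l < card J" by auto
    have A_kl: "(submatrix M J J - \<rho> \<cdot>\<^sub>m outer z) $$ (k,l) = M $$ (pick J k, pick J l) - \<rho> * (z $ k * z $ l)"
      using kl submatrix_carrier[OF M J] z by (simp add: submatrix_index_pick[OF M J kl] outer_def)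
    have abs_kl: "\<bar>x $ k * x $ l\<bar> = z $ k * z $ l * (x $ k * x $ l)" using signs kl by blast
    show "M $$ (pick J k, pick J l) * X $$ (pick J k, pick J l) - \<rho> * \<bar>X $$ (pick J k, pick J l)\<bar>
          = x $ k * (submatrix M J J - \<rho> \<cdot>\<^sub>m outer z) $$ (k,l) * x $ l"
      unfolding X_J[OF kl] A_kl abs_kl by (simp add: algebra_simps)
  qed
  also have "\<dots> = x \<bullet> ((submatrix M J J - \<rho> \<cdot>\<^sub>m outer z) *\<^sub>v x)"
    unfolding quad_form_mat[OF A x] quad_form_def ..
  finally show ?thesis .
qed

lemma padded_outer_diag_support:
  assumes J: "J \<subseteq> {..<d}" and x: "x \<in> carrier_vec (card J)" "\<forall>k<card J. x $ k \<noteq> 0"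
    and X: "X \<in> carrier_mat d d" "submatrix X J J = outer x"
      "\<forall>i<d. \<forall>j<d. i \<notin> J \<or> j \<notin> J \<longrightarrow> X $$ (i,j) = 0"
  shows "{i. i < d \<and> X $$ (i,i) \<noteq> 0} = J"
proof (intro equalityI subsetI)
  fix i assume "i \<in> J"
  with J obtain k where "k < card J" "i = pick J k"
    by (metis finite_lessThan finite_subset pick_surj)
  then show "i \<in> {i. i < d \<and> X $$ (i,i) \<noteq> 0}"
    using padded_outer_index[OF X(1,2) J x(1)] x(2) \<open>i \<in> J\<close> J by auto
qed (use X(3) in auto)

lemma sdp_feasible_supported_eq_padded_outer:
  assumes J: "J \<subseteq> {..<d}" and B: "B \<in> carrier_mat d d" "transpose_mat B = B"
    and gap: "lam 1 (submatrix B J J) > lam 2 (submatrix B J J)"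
    and x: "x \<in> carrier_vec (card J)" "x \<bullet> x = 1"
      "submatrix B J J *\<^sub>v x = lam 1 (submatrix B J J) \<cdot>\<^sub>v x"
    and X: "X \<in> carrier_mat d d" "submatrix X J J = outer x"
      "\<forall>i<d. \<forall>j<d. i \<notin> J \<or> j \<notin> J \<longrightarrow> X $$ (i,j) = 0"
    and Y: "sdp_feasible d Y" "\<forall>i<d. \<forall>j<d. i \<notin> J \<or> j \<notin> J \<longrightarrow> Y $$ (i,j) = 0"
    and opt: "frob_inner B Y = lam 1 (submatrix B J J)"
  shows "Y = X"
proof -
  let ?A = "submatrix B J J" and ?Y = "\<lambda>k l. Y $$ (pick J k, pick J l)"
  have A: "?A \<in> carrier_mat (card J) (card J)" "transpose_mat ?A = ?A"
    using submatrix_carrier[OF B(1) J] transpose_submatrix_sym[OF B J] by auto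
  have Yc: "Y \<in> carrier_mat d d" "transpose_mat Y = Y" "psd Y" "mtrace Y = 1"
    using Y(1) unfolding sdp_feasible_def by auto
  have symY: "symmetric_fun (card J) ?Y"
    using symmetric_fun_mat[OF Yc(1,2)] pick_lessThan(2)[OF J] unfolding symmetric_fun_def by auto
  have psdY: "psd_fun (card J) ?Y" by (rule psd_fun_restrict[OF J psd_fun_mat[OF Yc(1,3)]])
  have trY: "(\<Sum>k<card J. ?Y k k) = 1"
    using Yc(1,4) Y(2) unfolding mtrace_def by (simp add: sum_lessThan_pick[OF J])
  have "frob_inner B Y = (\<Sum>i<d. \<Sum>j<d. B $$ (i,j) * Y $$ (i,j))"
    unfolding frob_inner_def using B(1) by simp
  also have "\<dots> = (\<Sum>k<card J. \<Sum>l<card J. B $$ (pick J k, pick J l) * ?Y k l)"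
    using Y(2) by (subst sum2_lessThan_pick[OF J]) auto
  also have "\<dots> = (\<Sum>k<card J. \<Sum>l<card J. ?A $$ (k,l) * ?Y k l)"
    by (intro sum.cong refl) (simp add: submatrix_index_pick[OF B(1) J])
  finally have "(\<Sum>k<card J. \<Sum>l<card J. ?A $$ (k,l) * ?Y k l) = frob_inner B Y" ..
  then have rank_one: "?Y k l = x $ k * x $ l" if "k < card J" "l < card J" for k l
    using frobenius_eq_lam1_trace_imp_rank_one[OF A gap x symY psdY _ that] opt trY by simp
  then have "Y $$ (i,j) = X $$ (i,j)" if "i < d" "j < d" for i j
  proof (cases "i \<in> J \<and> j \<in> J")
    case True
    with J obtain k l where "k < card J" "l < card J" "i = pick J k" "j = pick J l"
      by (metis finite_lessThan finite_subset pick_surj)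
    then show ?thesis using padded_outer_index[OF X(1,2) J x(1)] rank_one by simp
  qed (use X(3) Y(2) that in auto)
  then show ?thesis using X(1) Yc(1) by (intro eq_matI) auto
qed

lemma abs_lt_1_off_block:
  assumes Z: "Z \<in> carrier_mat d d" "transpose_mat Z = Z"
    and cross: "\<forall>i<d. \<forall>j<d. i \<notin> J \<longrightarrow> j \<in> J \<longrightarrow> \<bar>Z $$ (i,j)\<bar> < 1"
    and outside: "\<forall>i<d. \<forall>j<d. i \<notin> J \<longrightarrow> j \<notin> J \<longrightarrow> \<bar>Z $$ (i,j)\<bar> < 1"
  shows "\<forall>i<d. \<forall>j<d. i \<notin> J \<or> j \<notin> J \<longrightarrow> \<bar>Z $$ (i,j)\<bar> < 1"
proof (intro allI impI)
  fix i j assume ij: "i < d" "j < d" "i \<notin> J \<or> j \<notin> J"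
  have sym: "Z $$ (i,j) = Z $$ (j,i)"
    using Z ij(1,2) by (metis carrier_matD index_transpose_mat(1))
  show "\<bar>Z $$ (i,j)\<bar> < 1"
  proof (cases "i \<in> J")
    case True
    with ij cross have "\<bar>Z $$ (j,i)\<bar> < 1" by blast
    with sym show ?thesis by simp
  next
    case False
    with ij cross outside show ?thesis by (cases "j \<in> J") blast+
  qed
qed

lemma abs_le_1_if_block_outer:
  assumes Z: "Z \<in> carrier_mat d d" "submatrix Z J J = outer z"
    and J: "J \<subseteq> {..<d}" and z: "z \<in> carrier_vec (card J)" "\<forall>k<card J. \<bar>z $ k\<bar> \<le> 1"
    and off: "\<forall>i<d. \<forall>j<d. i \<notin> J \<or> j \<notin> J \<longrightarrow> \<bar>Z $$ (i,j)\<bar> < 1"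
    and ij: "i < d" "j < d"
  shows "\<bar>Z $$ (i,j)\<bar> \<le> 1"
proof (cases "i \<in> J \<and> j \<in> J")
  case True
  with J obtain k l where kl: "k < card J" "l < card J" "i = pick J k" "j = pick J l"
    by (metis finite_lessThan finite_subset pick_surj)
  then have "\<bar>Z $$ (i,j)\<bar> = \<bar>z $ k\<bar> * \<bar>z $ l\<bar>"
    using padded_outer_index[OF Z J z(1)] by (simp add: abs_mult)
  also have "\<dots> \<le> 1" using z(2) kl by (simp add: mult_le_one)
  finally show ?thesis .
qed (use off ij in force)

text \<open>\<open>Z\<close> plays the role of a dual certificate: a subgradient of \<open>\<parallel>\<cdot>\<parallel>\<^sub>1\<^sub>,\<^sub>1\<close> at \<open>X\<close>.\<close>
theorem sdp_unique_opt_padded_top_eigenvector: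
  assumes J: "J \<subseteq> {..<d}" and d: "0 < d" and \<rho>: "\<rho> > 0"
    and M: "M \<in> carrier_mat d d" "transpose_mat M = M"
    and Z: "Z \<in> carrier_mat d d" "transpose_mat Z = Z" "submatrix Z J J = outer z"
    and z: "z \<in> carrier_vec (card J)" "\<forall>k<card J. \<bar>z $ k\<bar> \<le> 1"
    and off: "\<forall>i<d. \<forall>j<d. i \<notin> J \<or> j \<notin> J \<longrightarrow> \<bar>Z $$ (i,j)\<bar> < 1"
    and signs: "\<forall>k<card J. \<forall>l<card J. \<bar>x $ k * x $ l\<bar> = z $ k * z $ l * (x $ k * x $ l)"
    and lam: "lam 1 (submatrix (M - \<rho> \<cdot>\<^sub>m Z) J J) = lam 1 (M - \<rho> \<cdot>\<^sub>m Z)"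
    and gap: "lam 1 (submatrix (M - \<rho> \<cdot>\<^sub>m Z) J J) > lam 2 (submatrix (M - \<rho> \<cdot>\<^sub>m Z) J J)"
    and x: "x \<in> carrier_vec (card J)" "x \<bullet> x = 1"
      "submatrix (M - \<rho> \<cdot>\<^sub>m Z) J J *\<^sub>v x = lam 1 (submatrix (M - \<rho> \<cdot>\<^sub>m Z) J J) \<cdot>\<^sub>v x"
    and X: "X \<in> carrier_mat d d" "submatrix X J J = outer x"
      "\<forall>i<d. \<forall>j<d. i \<notin> J \<or> j \<notin> J \<longrightarrow> X $$ (i,j) = 0"
  shows "sdp_unique_opt d M \<rho> X"
proof -
  let ?B = "M - \<rho> \<cdot>\<^sub>m Z"
  have B: "?B \<in> carrier_mat d d" "transpose_mat ?B = ?B"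
    using Z(1) transpose_minus_smult_sym[OF M Z(1,2)] by (auto simp: minus_carrier_mat)
  have Z_le: "\<forall>i<d. \<forall>j<d. \<bar>Z $$ (i,j)\<bar> \<le> 1"
    using abs_le_1_if_block_outer[OF Z(1,3) J z off] by blast
  have "sdp_obj M \<rho> X = x \<bullet> (submatrix ?B J J *\<^sub>v x)"
    using padded_outer_sdp_obj[OF J x(1) X M(1) _ signs] submatrix_minus_smult[OF M(1) Z(1) J] Z(3) z(1)
    by simp
  then have obj: "sdp_obj M \<rho> X = lam 1 ?B" using x(1,2,3) lam by simp
  have "sdp_obj M \<rho> Y < sdp_obj M \<rho> X" if Y: "sdp_feasible d Y" "Y \<noteq> X" for Y
  proof -
    note bound = sdp_obj_le_lam1[OF M Z(1,2) Z_le less_imp_le[OF \<rho>] d Y(1)]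
    have "sdp_obj M \<rho> Y \<noteq> lam 1 ?B"
    proof
      assume "sdp_obj M \<rho> Y = lam 1 ?B"
      from bound(2)[OF \<rho> this] have frob: "frob_inner ?B Y = lam 1 ?B"
        and zero: "\<forall>i<d. \<forall>j<d. \<bar>Z $$ (i,j)\<bar> < 1 \<longrightarrow> Y $$ (i,j) = 0" by blast+
      have "\<forall>i<d. \<forall>j<d. i \<notin> J \<or> j \<notin> J \<longrightarrow> Y $$ (i,j) = 0" using zero off by blast
      moreover have "frob_inner ?B Y = lam 1 (submatrix ?B J J)" using frob lam by simp
      ultimately have "Y = X" by (rule sdp_feasible_supported_eq_padded_outer[OF J B gap x X Y(1)])
      with Y(2) show False ..
    qed
    with bound(1) obj show ?thesis by simp
  qed
  moreover have "sdp_feasible d X" by (rule padded_outer_feasible[OF J x(1,2) X])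
  ultimately show ?thesis unfolding sdp_unique_opt_def by blast
qed

lemma sgn_mult_self: "sgn x * x = \<bar>x :: real\<bar>"
  by (simp add: sgn_if)

lemma abs_mult_eq_if_signs_aligned:
  fixes x z :: "real vec"
  assumes signs: "(\<forall>k<n. z $ k = sgn (x $ k)) \<or> (\<forall>k<n. z $ k = - sgn (x $ k))"
    and kl: "k < n" "l < n"
  shows "\<bar>x $ k * x $ l\<bar> = z $ k * z $ l * (x $ k * x $ l)"
proof -
  have "(z $ k * x $ k) * (z $ l * x $ l) = \<bar>x $ k\<bar> * \<bar>x $ l\<bar>"
    using signs
  proof
    assume "\<forall>k<n. z $ k = sgn (x $ k)"
    with kl show ?thesis by (simp add: sgn_mult_self)
  next
    assume "\<forall>k<n. z $ k = - sgn (x $ k)"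
    with kl show ?thesis by (simp add: sgn_mult_self)
  qed
  then show ?thesis by (simp add: abs_mult mult_ac)
qed

theorem mainTheorem4:
  fixes d :: nat and Mstar M Zh Xh :: "real mat" and u zh xh :: "real vec"
    and \<rho> :: real and J :: "nat set"
  assumes d2: "d \<ge> 2"
    and Mstar: "Mstar \<in> carrier_mat d d" "transpose_mat Mstar = Mstar"
    and gap_star: "lam 1 Mstar > lam 2 Mstar"
    and u: "u \<in> carrier_vec d" "u \<bullet> u = 1" "Mstar *\<^sub>v u = lam 1 Mstar \<cdot>\<^sub>v u"
    and J: "J = {i. i < d \<and> u $ i \<noteq> 0}" and s2: "card J \<ge> 2"
    and M: "M \<in> carrier_mat d d" "transpose_mat M = M"
    and rho: "\<rho> > 0"
    and zh: "zh = vec (card J) (\<lambda>k. sgn (u $ pick J k))"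
    and xh: "xh \<in> carrier_vec (card J)" "xh \<bullet> xh = 1"
      "(submatrix M J J - \<rho> \<cdot>\<^sub>m outer zh) *\<^sub>v xh
         = lam 1 (submatrix M J J - \<rho> \<cdot>\<^sub>m outer zh) \<cdot>\<^sub>v xh"
    and Zh: "Zh \<in> carrier_mat d d" "transpose_mat Zh = Zh" "submatrix Zh J J = outer zh"
    and c1: "(\<forall>k < card J. sgn (u $ pick J k) = sgn (xh $ k))
           \<or> (\<forall>k < card J. sgn (u $ pick J k) = - sgn (xh $ k))"
    and c2: "(submatrix M ({0..<d} - J) J - \<rho> \<cdot>\<^sub>m submatrix Zh ({0..<d} - J) J) *\<^sub>v xh
               = 0\<^sub>v (d - card J)"
      "\<forall>i < d. \<forall>j < d. i \<notin> J \<longrightarrow> j \<in> J \<longrightarrow> \<bar>Zh $$ (i,j)\<bar> < 1"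
    and c3: "lam 1 (submatrix M J J - \<rho> \<cdot>\<^sub>m outer zh) = lam 1 (M - \<rho> \<cdot>\<^sub>m Zh)"
      "\<forall>i < d. \<forall>j < d. i \<notin> J \<longrightarrow> j \<notin> J \<longrightarrow> \<bar>Zh $$ (i,j)\<bar> < 1"
    and c4: "lam 1 (submatrix M J J - \<rho> \<cdot>\<^sub>m outer zh)
               > lam 2 (submatrix M J J - \<rho> \<cdot>\<^sub>m outer zh)"
    and Xh: "Xh \<in> carrier_mat d d" "submatrix Xh J J = outer xh"
      "\<forall>i < d. \<forall>j < d. i \<notin> J \<or> j \<notin> J \<longrightarrow> Xh $$ (i,j) = 0"
  shows "sdp_unique_opt d M \<rho> Xh \<and> {i. i < d \<and> Xh $$ (i,i) \<noteq> 0} = J"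
proof -
  have Jsub: "J \<subseteq> {..<d}" using J by auto
  have zh_car: "zh \<in> carrier_vec (card J)" and zh_idx: "\<forall>k<card J. zh $ k = sgn (u $ pick J k)"
    using zh by auto
  have "\<forall>k<card J. u $ pick J k \<noteq> 0" using J pick_lessThan(1)[OF Jsub] by auto
  with c1 have xh_nz: "\<forall>k<card J. xh $ k \<noteq> 0" by (auto simp: sgn_0_0)
  have signs: "\<forall>k<card J. \<forall>l<card J. \<bar>xh $ k * xh $ l\<bar> = zh $ k * zh $ l * (xh $ k * xh $ l)"
    using abs_mult_eq_if_signs_aligned[of "card J" zh xh] c1 zh_idx by simp
  have zh_le: "\<forall>k<card J. \<bar>zh $ k\<bar> \<le> 1" using zh_idx by (simp add: abs_sgn_eq)
  have block: "submatrix M J J - \<rho> \<cdot>\<^sub>m outer zh = submatrix (M - \<rho> \<cdot>\<^sub>m Zh) J J"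
    using submatrix_minus_smult[OF M(1) Zh(1) Jsub] Zh(3) by simp
  have "sdp_unique_opt d M \<rho> Xh"
    using d2 c3(1) c4 xh(3) unfolding block
    by (intro sdp_unique_opt_padded_top_eigenvector[OF Jsub _ rho M Zh zh_car zh_le
          abs_lt_1_off_block[OF Zh(1,2) c2(2) c3(2)] signs _ _ xh(1,2) _ Xh]) simp_all
  moreover have "{i. i < d \<and> Xh $$ (i,i) \<noteq> 0} = J"
    by (rule padded_outer_diag_support[OF Jsub xh(1) xh_nz Xh])
  ultimately show ?thesis ..
qed

end
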